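(* Let $G$ be a graph with a linear order $<$ on $V(G)$ satisfying the X-property, let $s<t$ be vertices with $d^*:=\operatorname{dist}(s,t)<\infty$, and let $P=p_0,p_1,\dots,p_{d^*}$ (with $p_0=s$, $p_{d^*}=t$) be a shortest $s$-$t$ path. Then every $p_i$ with $i<\operatorname{righti}(P)$ satisfies $p_i<t$, and every $p_i$ with $i>\operatorname{lefti}(P)$ satisfies $p_i>s$.
   Context: The X-property: for all vertices $p<q<r<s$, if $\{p,r\}\in E(G)$ and $\{q,s\}\in E(G)$ then $\{p,s\}\in E(G)$. $\operatorname{dist}$ is the number of edges of a shortest path. $\operatorname{lefti}(P)$ is the index $i$ such that $p_i$ is the leftmost (w.r.t. $<$) vertex of $P$, and $\operatorname{righti}(P)$ the index of the rightmost vertex of $P$. *)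

theory Defs
  imports Main "HOL-Library.Extended_Nat"
begin

definition simple_graph :: "'a set \<Rightarrow> 'a set set \<Rightarrow> bool" where
  "simple_graph V E \<longleftrightarrow> (\<forall>e\<in>E. \<exists>u v. e = {u, v} \<and> u \<noteq> v \<and> u \<in> V \<and> v \<in> V)"

definition X_property :: "'a::linorder set set \<Rightarrow> bool" where
  "X_property E \<longleftrightarrow>
     (\<forall>p q r s. p < q \<and> q < r \<and> r < s \<and> {p, r} \<in> E \<and> {q, s} \<in> E \<longrightarrow> {p, s} \<in> E)"

definition walk :: "'a set \<Rightarrow> 'a set set \<Rightarrow> 'a list \<Rightarrow> bool" where
  "walk V E P \<longleftrightarrow> P \<noteq> [] \<and> set P \<subseteq> V \<and>
     (\<forall>i. Suc i < length P \<longrightarrow> {P ! i, P ! Suc i} \<in> E)"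

text \<open>Distance: number of edges of a shortest walk (= shortest path); \<infinity> if none.\<close>
definition dist :: "'a set \<Rightarrow> 'a set set \<Rightarrow> 'a \<Rightarrow> 'a \<Rightarrow> enat" where
  "dist V E s t = (INF P \<in> {P. walk V E P \<and> hd P = s \<and> last P = t}. enat (length P - 1))"

definition shortest_path :: "'a set \<Rightarrow> 'a set set \<Rightarrow> 'a \<Rightarrow> 'a \<Rightarrow> 'a list \<Rightarrow> bool" where
  "shortest_path V E s t P \<longleftrightarrow> walk V E P \<and> hd P = s \<and> last P = t \<and>
     enat (length P - 1) = dist V E s t"

text \<open>Index of the leftmost / rightmost vertex of P (unique, as shortest paths are distinct).\<close>
definition lefti :: "'a::linorder list \<Rightarrow> nat" where
  "lefti P = (LEAST i. i < length P \<and> P ! i = Min (set P))"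

definition righti :: "'a::linorder list \<Rightarrow> nat" where
  "righti P = (LEAST i. i < length P \<and> P ! i = Max (set P))"

end

theory Submission
  imports Defs
begin

text \<open>Let \<open>t\<close> be the last vertex and \<open>r\<close> the index of the rightmost vertex of the path.
  If some \<open>p\<^sub>i\<close> with \<open>i < r\<close> lay to the right of \<open>t\<close>, there is a first edge
  \<open>p\<^sub>a p\<^sub>a\<^sub>+\<^sub>1\<close> jumping over \<open>t\<close>. The rest of the path
  starts at \<open>p\<^sub>r\<close>, which lies beyond \<open>p\<^sub>a\<^sub>+\<^sub>1\<close>, and ends at \<open>t\<close>, which lies
  between \<open>p\<^sub>a\<close> and \<open>p\<^sub>a\<^sub>+\<^sub>1\<close>, so one of its later edges enters this interval from
  outside and thus crosses \<open>p\<^sub>a p\<^sub>a\<^sub>+\<^sub>1\<close>. The X-property turns this crossing into a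
  chord, which a shortest path cannot have; the one exception, an edge two steps later entering
  from below \<open>p\<^sub>a\<close>, would have to start at \<open>p\<^sub>r\<close> and is excluded by maximality. The statement about \<open>s\<close> is the mirror image, obtained
  by reversing the path and the order.\<close>

lemma walk_append:
  assumes "walk V E xs" and "walk V E ys" and "{last xs, hd ys} \<in> E"
  shows "walk V E (xs @ ys)"
  unfolding walk_def
proof (intro conjI allI impI)
  show "xs @ ys \<noteq> []" and "set (xs @ ys) \<subseteq> V"
    using assms(1,2) by (auto simp: walk_def)
  fix i assume i: "Suc i < length (xs @ ys)"
  have xs: "xs \<noteq> []" and ys: "ys \<noteq> []" using assms(1,2) by (auto simp: walk_def)
  consider "Suc i < length xs" | "Suc i = length xs" | "length xs < Suc i" by linarith
  then show "{(xs @ ys) ! i, (xs @ ys) ! Suc i} \<in> E"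
  proof cases
    case 1
    then show ?thesis using assms(1) by (simp add: walk_def nth_append)
  next
    case 2
    then have "last xs = xs ! i" and "hd ys = ys ! 0"
      using xs ys by (simp_all add: last_conv_nth hd_conv_nth flip: 2)
    then show ?thesis using assms(3) 2 by (simp add: nth_append)
  next
    case 3
    then obtain j where j: "i = length xs + j" by (metis less_Suc_eq_le le_iff_add)
    then show ?thesis using assms(2) i by (simp add: walk_def nth_append)
  qed
qed

lemma walk_take: "walk V E P \<Longrightarrow> 0 < m \<Longrightarrow> walk V E (take m P)"
  by (auto simp: walk_def dest: in_set_takeD)

lemma walk_drop: "walk V E P \<Longrightarrow> k < length P \<Longrightarrow> walk V E (drop k P)"
  by (auto simp: walk_def dest: in_set_dropD)

lemma walk_shortcut:
  assumes "walk V E P" and "j < k" and "k < length P" and "{P ! j, P ! k} \<in> E"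
  shows "walk V E (take (Suc j) P @ drop k P)"
  using assms
  by (intro walk_append walk_take walk_drop) (simp_all add: take_Suc_conv_app_nth hd_drop_conv_nth)

lemma shortest_path_length_le:
  assumes "shortest_path V E s t P" and "walk V E Q" and "hd Q = s" and "last Q = t"
  shows "length P \<le> length Q"
proof -
  have "enat (length P - 1) \<le> enat (length Q - 1)"
    using assms unfolding shortest_path_def dist_def by (auto intro: INF_lower)
  then have "length P - 1 \<le> length Q - 1" by simp
  moreover have "0 < length P" and "0 < length Q"
    using assms by (auto simp: shortest_path_def walk_def)
  ultimately show ?thesis by linarith
qed

lemma shortest_path_chordless:
  assumes sp: "shortest_path V E s t P" and "Suc a < k" and "k < length P"
  shows "{P ! a, P ! k} \<notin> E"
proof
  assume "{P ! a, P ! k} \<in> E"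
  then have "walk V E (take (Suc a) P @ drop k P)"
    using sp assms(2,3) by (intro walk_shortcut) (auto simp: shortest_path_def)
  then have "length P \<le> length (take (Suc a) P @ drop k P)"
    using sp assms(2,3) by (intro shortest_path_length_le) (auto simp: shortest_path_def hd_append)
  then show False using assms(2,3) by simp
qed

lemma shortest_path_distinct:
  assumes sp: "shortest_path V E s t P"
  shows "distinct P"
proof (rule ccontr)
  assume "\<not> distinct P"
  then obtain a k where ak: "a < k" "k < length P" "P ! a = P ! k"
    by (metis distinct_conv_nth linorder_neqE_nat)
  have w: "walk V E P" and ends: "hd P = s" "last P = t" using sp by (auto simp: shortest_path_def)
  have "hd P = P ! 0" using ak(2) by (cases P) auto
  obtain Q where Q: "walk V E Q" "hd Q = s" "last Q = t" and shorter: "length Q < length P"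
  proof (cases a)
    case 0
    have "walk V E (drop k P)" using w ak(2) by (rule walk_drop)
    moreover have "hd (drop k P) = s" using ak 0 ends \<open>hd P = P ! 0\<close> by (simp add: hd_drop_conv_nth)
    moreover have "last (drop k P) = t" using ak(2) ends by simp
    moreover have "length (drop k P) < length P" using ak by simp
    ultimately show ?thesis by (rule that)
  next
    case (Suc b)
    have "{P ! b, P ! k} \<in> E" using w ak Suc by (auto simp: walk_def simp flip: ak(3))
    then have "walk V E (take a P @ drop k P)" using walk_shortcut[OF w, of b k] ak Suc by simp
    moreover have "hd (take a P @ drop k P) = s" using ends Suc ak(1,2) by (cases P) auto
    moreover have "last (take a P @ drop k P) = t" using ak(2) ends by simp
    moreover have "length (take a P @ drop k P) < length P" using ak by simp
    ultimately show ?thesis by (rule that)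
  qed
  with shortest_path_length_le[OF sp Q] show False by simp
qed

definition induced_path :: "('a \<Rightarrow> 'a \<Rightarrow> bool) \<Rightarrow> 'a list \<Rightarrow> bool" where
  "induced_path adj P \<longleftrightarrow> distinct P \<and>
     (\<forall>j. Suc j < length P \<longrightarrow> adj (P ! j) (P ! Suc j)) \<and>
     (\<forall>a k. Suc a < k \<longrightarrow> k < length P \<longrightarrow> \<not> adj (P ! a) (P ! k))"

lemma shortest_path_induced:
  assumes "shortest_path V E s t P"
  shows "induced_path (\<lambda>x y. {x, y} \<in> E) P"
  using assms shortest_path_distinct[OF assms] shortest_path_chordless[OF assms]
  by (auto simp: induced_path_def shortest_path_def walk_def)

lemma induced_path_rev:
  assumes "symp adj" and "induced_path adj P"
  shows "induced_path adj (rev P)"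
  unfolding induced_path_def
proof (intro conjI allI impI)
  show "distinct (rev P)" using assms(2) by (simp add: induced_path_def)
next
  fix j assume j: "Suc j < length (rev P)"
  have "adj (P ! (length P - Suc (Suc j))) (P ! Suc (length P - Suc (Suc j)))"
    using assms(2) j by (simp add: induced_path_def)
  moreover have "Suc (length P - Suc (Suc j)) = length P - Suc j" using j by simp
  ultimately show "adj (rev P ! j) (rev P ! Suc j)"
    using j assms(1) by (simp add: rev_nth symp_def)
next
  fix a k assume ak: "Suc a < k" "k < length (rev P)"
  have "\<not> adj (P ! (length P - Suc k)) (P ! (length P - Suc a))"
    using assms(2) ak by (simp add: induced_path_def)
  then show "\<not> adj (rev P ! a) (rev P ! k)"
    using ak by (auto simp: rev_nth dest: sympD[OF assms(1)])
qed

lemma exists_switch_nat: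
  assumes "m \<le> n" and "\<not> Q m" and "Q n"
  shows "\<exists>k. m \<le> k \<and> k < n \<and> \<not> Q k \<and> Q (Suc k)"
  using assms
proof (induction n)
  case (Suc n)
  then show ?case by (cases "Q n") (force simp: le_Suc_eq)+
qed simp

context linorder
begin

lemma induced_path_entering_edge:
  assumes X: "\<And>p q r s. p < q \<Longrightarrow> q < r \<Longrightarrow> r < s \<Longrightarrow> adj p r \<Longrightarrow> adj q s \<Longrightarrow> adj p s"
    and sym: "symp adj"
    and path: "induced_path adj P"
    and "Suc a < k" and "Suc k < length P"
    and enters: "P ! a < P ! Suc k" "P ! Suc k < P ! Suc a"
    and outside: "\<not> (P ! a < P ! k \<and> P ! k < P ! Suc a)"
  shows "k = Suc (Suc a) \<and> P ! k < P ! a"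
proof -
  have edges: "adj (P ! a) (P ! Suc a)" "adj (P ! k) (P ! Suc k)"
    and chordless: "\<And>j. Suc j < k \<Longrightarrow> \<not> adj (P ! j) (P ! k)"
    using path \<open>Suc a < k\<close> \<open>Suc k < length P\<close> by (auto simp: induced_path_def)
  have "P ! k \<noteq> P ! a" and "P ! k \<noteq> P ! Suc a"
    using path \<open>Suc a < k\<close> \<open>Suc k < length P\<close> by (auto simp: induced_path_def nth_eq_iff_index_eq)
  then consider "P ! k < P ! a" | "P ! Suc a < P ! k"
    using outside by (auto simp: neq_iff)
  then show ?thesis
  proof cases
    case 1
    have "adj (P ! k) (P ! Suc a)" using X[OF 1 enters edges(2) edges(1)] .
    then have "\<not> Suc (Suc a) < k" using chordless sym by (auto dest: sympD)
    then show ?thesis using 1 \<open>Suc a < k\<close> by simp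
  next
    case 2
    have "adj (P ! a) (P ! k)"
      using X[OF enters 2 edges(1)] edges(2) sym by (auto dest: sympD)
    then show ?thesis using chordless \<open>Suc a < k\<close> by blast
  qed
qed

lemma induced_path_before_max_below_last:
  assumes X: "\<And>p q r s. p < q \<Longrightarrow> q < r \<Longrightarrow> r < s \<Longrightarrow> adj p r \<Longrightarrow> adj q s \<Longrightarrow> adj p s"
    and sym: "symp adj"
    and path: "induced_path adj P"
    and ends: "hd P < last P"
    and r: "r < length P" "\<And>j. j < length P \<Longrightarrow> P ! j \<le> P ! r"
    and "i < r"
  shows "P ! i < last P"
proof (rule ccontr)
  assume not_below: "\<not> P ! i < last P"
  define n where "n = length P - 1"
  have len: "length P = Suc n" using r(1) n_def by simp
  have "P \<noteq> []" using r(1) by auto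
  then have P_n: "P ! n = last P" and P_0: "P ! 0 = hd P"
    by (simp_all add: last_conv_nth hd_conv_nth n_def)
  have inj: "\<And>j k. j \<le> n \<Longrightarrow> k \<le> n \<Longrightarrow> P ! j = P ! k \<longleftrightarrow> j = k"
    using path len by (auto simp: induced_path_def nth_eq_iff_index_eq)
  have "P ! i \<noteq> P ! n" using inj[of i n] \<open>i < r\<close> r(1) len by simp
  then have "last P < P ! i" using not_below P_n by auto
  then obtain a where a: "a < i" "\<not> last P < P ! a" "last P < P ! Suc a"
    using exists_switch_nat[of 0 i "\<lambda>j. last P < P ! j"] less_asym[OF ends] P_0 by auto
  have "P ! a \<noteq> P ! n" using inj[of a n] a(1) \<open>i < r\<close> r(1) len by simp
  then have a_below: "P ! a < last P" using a(2) P_n by auto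
  define inside where "inside x \<longleftrightarrow> P ! a < x \<and> x < P ! Suc a" for x
  have "P ! Suc a \<noteq> P ! r" using inj[of "Suc a" r] a(1) \<open>i < r\<close> r(1) len by simp
  moreover have "P ! Suc a \<le> P ! r" using r a(1) \<open>i < r\<close> by simp
  ultimately have "P ! Suc a < P ! r" by simp
  then have "\<not> inside (P ! r)" by (auto simp: inside_def dest: less_asym)
  moreover have "inside (P ! n)" using a(3) a_below P_n by (simp add: inside_def)
  ultimately obtain k where k: "r \<le> k" "k < n" "\<not> inside (P ! k)" "inside (P ! Suc k)"
    using exists_switch_nat[of r n "\<lambda>j. inside (P ! j)"] r(1) len by auto
  have entering: "k = Suc (Suc a) \<and> P ! k < P ! a"
    by (rule induced_path_entering_edge[where adj = adj, OF X sym path])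
      (use k a(1) \<open>i < r\<close> len in \<open>auto simp: inside_def\<close>)
  then have "k = r" using k(1) a(1) \<open>i < r\<close> by linarith
  with entering have "P ! r < P ! a" by blast
  then show False using r(2)[of a] a(1) \<open>i < r\<close> r(1) by (auto dest: leD)
qed

end

lemma induced_path_after_min_above_first:
  fixes P :: "'a::linorder list"
  assumes X: "\<And>p q r s. p < q \<Longrightarrow> q < r \<Longrightarrow> r < s \<Longrightarrow> adj p r \<Longrightarrow> adj q s \<Longrightarrow> adj p s"
    and sym: "symp adj"
    and path: "induced_path adj P"
    and ends: "hd P < last P"
    and l: "l < length P" "\<And>j. j < length P \<Longrightarrow> P ! l \<le> P ! j"
    and "l < i" and "i < length P"
  shows "hd P < P ! i"
proof -
  interpret dual: linorder "\<lambda>x y :: 'a. y \<le> x" "\<lambda>x y :: 'a. y < x"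
    using dual_linorder .
  have "last (rev P) < rev P ! (length P - Suc i)"
  proof (rule dual.induced_path_before_max_below_last[where r = "length P - Suc l"])
    show "adj p s" if "q < p" "r < q" "s < r" "adj p r" "adj q s" for p q r s
      using X[OF that(3,2,1)] that(4,5) sym by (simp add: symp_def)
    show "induced_path adj (rev P)" using induced_path_rev[OF sym path] .
    show "rev P ! j \<ge> rev P ! (length P - Suc l)" if "j < length (rev P)" for j
      using l that by (simp add: rev_nth)
  qed (use sym ends l \<open>l < i\<close> \<open>i < length P\<close> in \<open>auto simp: hd_rev last_rev\<close>)
  then show ?thesis using \<open>i < length P\<close> by (simp add: last_rev rev_nth)
qed

lemma righti_is_max:
  fixes P :: "'a::linorder list"
  assumes "P \<noteq> []"
  shows "righti P < length P" and "j < length P \<Longrightarrow> P ! j \<le> P ! righti P"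
proof -
  have "\<exists>i. i < length P \<and> P ! i = Max (set P)"
    using assms by (metis Max_in List.finite_set in_set_conv_nth set_empty)
  then have "righti P < length P \<and> P ! righti P = Max (set P)"
    unfolding righti_def by (rule LeastI_ex)
  then show "righti P < length P" and "j < length P \<Longrightarrow> P ! j \<le> P ! righti P" by auto
qed

lemma lefti_is_min:
  fixes P :: "'a::linorder list"
  assumes "P \<noteq> []"
  shows "lefti P < length P" and "j < length P \<Longrightarrow> P ! lefti P \<le> P ! j"
proof -
  have "\<exists>i. i < length P \<and> P ! i = Min (set P)"
    using assms by (metis Min_in List.finite_set in_set_conv_nth set_empty)
  then have "lefti P < length P \<and> P ! lefti P = Min (set P)"
    unfolding lefti_def by (rule LeastI_ex)
  then show "lefti P < length P" and "j < length P \<Longrightarrow> P ! lefti P \<le> P ! j" by auto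
qed

theorem corollary9:
  fixes V :: "'a::linorder set" and E :: "'a set set" and s t :: 'a and P :: "'a list"
  assumes "simple_graph V E"
    and "X_property E"
    and "s \<in> V" and "t \<in> V" and "s < t"
    and "dist V E s t < \<infinity>"
    and "shortest_path V E s t P"
  shows "\<forall>i < length P. (i < righti P \<longrightarrow> P ! i < t) \<and> (lefti P < i \<longrightarrow> s < P ! i)"
proof -
  let ?adj = "\<lambda>x y. {x, y} \<in> E"
  have X: "\<And>p q r s. p < q \<Longrightarrow> q < r \<Longrightarrow> r < s \<Longrightarrow> ?adj p r \<Longrightarrow> ?adj q s \<Longrightarrow> ?adj p s"
    using assms(2) unfolding X_property_def by blast
  have sym: "symp ?adj" by (simp add: symp_def insert_commute)
  have path: "induced_path ?adj P" using shortest_path_induced[OF assms(7)] .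
  have ne: "P \<noteq> []" and ends: "hd P = s" "last P = t"
    using assms(7) by (auto simp: shortest_path_def walk_def)
  with \<open>s < t\<close> have "hd P < last P" by simp
  have "P ! i < t" if "i < righti P" for i
    using induced_path_before_max_below_last[OF X sym path \<open>hd P < last P\<close>
        righti_is_max[OF ne] that] ends by simp
  moreover have "s < P ! i" if "lefti P < i" and "i < length P" for i
    using induced_path_after_min_above_first[OF X sym path \<open>hd P < last P\<close>
        lefti_is_min[OF ne] that] ends by simp
  ultimately show ?thesis by blast
qed

end
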